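(* Let $V$ be a real vector space of odd finite dimension, $G\le\mathrm{GL}(V)$ a finite group such that $V$ is a non-trivial irreducible $\mathbb{R}G$-module and $-\mathrm{id}_V\notin G$, and let $n\in N_{\mathrm{GL}(V)}(G)$ have finite order, with $\nu=\mathrm{ad}_n\in\mathrm{Aut}(G)$ the automorphism $y\mapsto nyn^{-1}$. Suppose there is $g\in G$ such that $\mathrm{ad}_g\circ\nu$ has order $2$ in $\mathrm{Aut}(G)$. Then there is $h\in G$ such that $hn$ has eigenvalue $1$, i.e. $(G,V,n)$ has the $E1$-property.
   Context: For $x\in N_{\mathrm{GL}(V)}(G)$, $\mathrm{ad}_x\in\mathrm{Aut}(G)$ denotes conjugation $y\mapsto xyx^{-1}$. *)

theory Defs
  imports "HOL-Analysis.Analysis"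
begin

type_synonym 'n linmap = "real ^ 'n ^ 'n"

definition ad :: "'n::finite linmap \<Rightarrow> 'n linmap \<Rightarrow> 'n linmap" where
  "ad x y = x ** y ** matrix_inv x"

definition matpow :: "'n::finite linmap \<Rightarrow> nat \<Rightarrow> 'n linmap" where
  "matpow A k = ((\<lambda>B. B ** A) ^^ k) (mat 1)"

definition finite_GL_subgroup :: "'n::finite linmap set \<Rightarrow> bool" where
  "finite_GL_subgroup G \<longleftrightarrow> finite G \<and> G \<subseteq> {A. invertible A} \<and> mat 1 \<in> G
     \<and> (\<forall>A\<in>G. \<forall>B\<in>G. A ** B \<in> G) \<and> (\<forall>A\<in>G. matrix_inv A \<in> G)"

definition irreducible_module :: "'n::finite linmap set \<Rightarrow> bool" where
  "irreducible_module G \<longleftrightarrow>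
     (\<forall>W :: (real ^ 'n) set. subspace W \<and> (\<forall>g\<in>G. \<forall>w\<in>W. g *v w \<in> W)
        \<longrightarrow> W = {0} \<or> W = UNIV)"

definition in_normaliser :: "'n::finite linmap \<Rightarrow> 'n linmap set \<Rightarrow> bool" where
  "in_normaliser x G \<longleftrightarrow> invertible x \<and> ad x ` G = G"

text \<open>Order of an element of finite order (order 2 of an automorphism of G is
  expressed via its action on G).\<close>
definition has_order_two_on :: "('a \<Rightarrow> 'a) \<Rightarrow> 'a set \<Rightarrow> bool" where
  "has_order_two_on \<phi> G \<longleftrightarrow> (\<exists>y\<in>G. \<phi> y \<noteq> y) \<and> (\<forall>y\<in>G. \<phi> (\<phi> y) = y)"

end

theory Submission
  imports Defs
begin

text \<open>Put \<open>m = g n\<close>. As \<open>ad m\<close> is an involution of \<open>G\<close>, the square \<open>m\<^sup>2\<close> centralises \<open>G\<close>.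
  In odd dimension \<open>m\<^sup>2\<close> has a real eigenvalue \<open>\<lambda>\<close>; its eigenspace is \<open>G\<close>-invariant, so by
  irreducibility \<open>m\<^sup>2 = \<lambda> id\<close>. Elements of finite order have determinant \<open>\<plusminus>1\<close>, so
  \<open>\<lambda> ^ dim V = det (m\<^sup>2) = 1\<close>, and oddness of \<open>dim V\<close> gives \<open>\<lambda> = 1\<close>. An involution
  \<open>m \<noteq> -id\<close> fixes the nonzero vector \<open>m u + u\<close> for a suitable \<open>u\<close>, and \<open>m = -id\<close> is excluded
  because then \<open>ad m\<close> would be trivial.\<close>

lemma matrix_inv_right:
  fixes A :: "'a::field ^ 'n::finite ^ 'n"
  assumes "invertible A"
  shows "A ** matrix_inv A = mat 1"
  using assms unfolding invertible_def matrix_inv_def by (rule someI2_ex) blast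

lemma matrix_inv_left:
  fixes A :: "'a::field ^ 'n::finite ^ 'n"
  assumes "invertible A"
  shows "matrix_inv A ** A = mat 1"
  using assms unfolding invertible_def matrix_inv_def by (rule someI2_ex) blast

lemma matrix_inv_mult_cancel_left:
  fixes A B :: "'a::field ^ 'n::finite ^ 'n"
  assumes "invertible A"
  shows "matrix_inv A ** (A ** B) = B"
  by (simp add: matrix_mul_assoc matrix_inv_left assms)

lemma matrix_inv_eqI:
  fixes A B :: "'a::field ^ 'n::finite ^ 'n"
  assumes "A ** B = mat 1"
  shows "matrix_inv A = B"
proof -
  have "invertible A"
    using assms invertible_right_inverse by blast
  have "matrix_inv A = matrix_inv A ** (A ** B)"
    by (simp add: assms)
  then show ?thesis
    by (simp add: matrix_inv_mult_cancel_left \<open>invertible A\<close>)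
qed

lemma matrix_inv_mult:
  fixes A B :: "'a::field ^ 'n::finite ^ 'n"
  assumes "invertible A" "invertible B"
  shows "matrix_inv (A ** B) = matrix_inv B ** matrix_inv A"
proof (rule matrix_inv_eqI)
  have "A ** B ** (matrix_inv B ** matrix_inv A) = A ** (B ** matrix_inv B) ** matrix_inv A"
    by (simp add: matrix_mul_assoc)
  then show "A ** B ** (matrix_inv B ** matrix_inv A) = mat 1"
    by (simp add: assms matrix_inv_right)
qed

lemma ad_ad:
  assumes "invertible x" "invertible y"
  shows "ad x (ad y z) = ad (x ** y) z"
  by (simp add: ad_def assms matrix_inv_mult matrix_mul_assoc)

lemma ad_eq_self_iff:
  assumes "invertible x"
  shows "ad x y = y \<longleftrightarrow> x ** y = y ** x"
proof
  assume "ad x y = y"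
  then have "x ** y ** (matrix_inv x ** x) = y ** x"
    unfolding ad_def by (metis matrix_mul_assoc)
  then show "x ** y = y ** x"
    by (simp add: assms matrix_inv_left)
next
  assume "x ** y = y ** x"
  then have "ad x y = y ** (x ** matrix_inv x)"
    by (simp add: ad_def matrix_mul_assoc)
  then show "ad x y = y"
    by (simp add: assms matrix_inv_right)
qed

lemma matrix_mul_lneg: "(- A :: 'a::ring_1 ^ 'n::finite ^ 'm) ** B = - (A ** B)"
  by (simp add: matrix_matrix_mult_def sum_negf vec_eq_iff)

lemma matrix_mul_rneg: "(A :: 'a::ring_1 ^ 'n::finite ^ 'm) ** - B = - (A ** B)"
  by (simp add: matrix_matrix_mult_def sum_negf vec_eq_iff)

lemma matrix_vector_mult_lneg: "(- A :: 'a::ring_1 ^ 'n::finite ^ 'm) *v x = - (A *v x)"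
  by (simp add: matrix_vector_mult_def sum_negf vec_eq_iff)

lemma ad_neg_one: "ad (- mat 1) y = y"
proof -
  have inv: "matrix_inv (- mat 1 :: real ^ 'n ^ 'n) = - mat 1"
    by (rule matrix_inv_eqI) (simp add: matrix_mul_lneg matrix_mul_rneg)
  show ?thesis
    unfolding ad_def inv by (simp add: matrix_mul_lneg matrix_mul_rneg)
qed

lemma square_commutes_if_has_order_two_on:
  assumes "invertible m" "has_order_two_on (ad m) G" "y \<in> G"
  shows "(m ** m) ** y = y ** (m ** m)"
proof -
  have "ad (m ** m) y = y"
    using assms by (simp add: has_order_two_on_def ad_ad[symmetric])
  then show ?thesis
    by (simp add: ad_eq_self_iff assms(1) invertible_mult)
qed

lemma matpow_add: "matpow A (i + j) = matpow A i ** matpow A j"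
  by (induction j) (simp_all add: matpow_def matrix_mul_assoc)

lemma det_matpow: "det (matpow (A :: real ^ 'n::finite ^ 'n) k) = det A ^ k"
  by (induction k) (simp_all add: matpow_def det_mul)

lemma matpow_in_finite_GL_subgroup:
  assumes "finite_GL_subgroup G" "A \<in> G"
  shows "matpow A k \<in> G"
  using assms by (induction k) (auto simp: matpow_def finite_GL_subgroup_def)

lemma finite_GL_subgroup_finite_order:
  assumes G: "finite_GL_subgroup G" and "A \<in> G"
  shows "\<exists>k>0. matpow A k = mat 1"
proof -
  have "range (matpow A) \<subseteq> G"
    using matpow_in_finite_GL_subgroup[OF G \<open>A \<in> G\<close>] by auto
  then have "\<not> inj (matpow A)"
    using G finite_subset infinite_UNIV_nat finite_imageD
    unfolding finite_GL_subgroup_def by blast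
  then obtain i j where "i < j" "matpow A i = matpow A j"
    unfolding inj_def by (metis linorder_neqE_nat)
  moreover have "j = i + (j - i)"
    using \<open>i < j\<close> by simp
  ultimately have eq: "matpow A i ** mat 1 = matpow A i ** matpow A (j - i)"
    by (metis matpow_add matrix_mul_rid)
  have "invertible (matpow A i)"
    using G matpow_in_finite_GL_subgroup[OF G \<open>A \<in> G\<close>] unfolding finite_GL_subgroup_def by blast
  then have "matpow A (j - i) = mat 1"
    by (metis eq matrix_inv_mult_cancel_left)
  then show ?thesis
    using \<open>i < j\<close> by (intro exI[of _ "j - i"]) simp
qed

lemma abs_det_eq_1_if_matpow_eq_1:
  fixes A :: "real ^ 'n::finite ^ 'n"
  assumes "k > 0" "matpow A k = mat 1"
  shows "\<bar>det A\<bar> = 1"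
proof -
  have "\<bar>det A\<bar> ^ k = 1"
    using det_matpow[of A k] assms(2) by (simp add: power_abs[symmetric])
  then show ?thesis
    using assms(1) power_eq_iff_eq_base[of k "\<bar>det A\<bar>" 1] by simp
qed

lemma det_scaleR:
  fixes A :: "real ^ 'n::finite ^ 'n"
  shows "det (k *\<^sub>R A) = k ^ CARD('n) * det A"
proof -
  have "k *\<^sub>R A = (\<chi> i. k *s A $ i)"
    by (simp add: vec_eq_iff)
  then show ?thesis
    using det_rows_mul[of "\<lambda>_. k" "\<lambda>i. A $ i"] by (simp add: vec_lambda_eta)
qed

lemma scalar_matrix_eq_id_if_det_eq_1:
  assumes "odd CARD('n::finite)" "det (l *\<^sub>R mat 1 :: real ^ 'n ^ 'n) = 1"
  shows "l = 1"
proof -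
  have "l ^ CARD('n) = 1"
    using assms(2) by (simp add: det_scaleR)
  then show ?thesis
    by (metis assms(1) odd_pos odd_real_root_power_cancel real_root_one)
qed

lemma continuous_on_det:
  fixes A :: "real \<Rightarrow> real ^ 'n::finite ^ 'n"
  assumes "continuous_on S A"
  shows "continuous_on S (\<lambda>t. det (A t))"
  unfolding det_def by (intro continuous_intros assms)

text \<open>The characteristic polynomial \<open>q t = det (c - t id)\<close> equals \<open>(-t)\<^sup>d\<^sup>i\<^sup>m det (id - c/t)\<close> and
  \<open>det (id - s c) \<rightarrow> 1\<close> as \<open>s \<rightarrow> 0\<close>, so in odd dimension \<open>q\<close> changes sign.\<close>

lemma odd_dimension_det_sub_scalar_eq_0:
  fixes c :: "real ^ 'n::finite ^ 'n"
  assumes odd: "odd CARD('n)"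
  shows "\<exists>l. det (c - l *\<^sub>R mat 1) = 0"
proof -
  define r where "r s = det (mat 1 - s *\<^sub>R c)" for s
  define q where "q t = det (c - t *\<^sub>R mat 1)" for t
  have "continuous_on UNIV r" "continuous_on UNIV q"
    unfolding r_def q_def by (intro continuous_on_det continuous_intros)+
  have "(r \<longlongrightarrow> r 0) (at 0)"
    using \<open>continuous_on UNIV r\<close> unfolding continuous_on_def by blast
  moreover have "r 0 = 1"
    by (simp add: r_def)
  ultimately have "eventually (\<lambda>s. 0 < r s) (at 0)"
    by (intro order_tendstoD(1)) auto
  then obtain d where "d > 0" and r_pos: "\<And>s. s \<noteq> 0 \<Longrightarrow> \<bar>s\<bar> < d \<Longrightarrow> r s > 0"
    by (auto simp: eventually_at dist_real_def)
  have q_r: "q t = (- t) ^ CARD('n) * r (1 / t)" if "t \<noteq> 0" for t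
  proof -
    have eq: "c - t *\<^sub>R mat 1 = (- t) *\<^sub>R (mat 1 - (1 / t) *\<^sub>R c)"
      using that by (simp add: scaleR_diff_right)
    show ?thesis
      unfolding q_def r_def eq det_scaleR by (rule refl)
  qed
  have "q (2 / d) < 0"
    using q_r[of "2 / d"] r_pos[of "d / 2"] \<open>d > 0\<close> odd
    by (simp add: power_minus_odd mult_pos_pos)
  moreover have "q (- (2 / d)) > 0"
    using q_r[of "- (2 / d)"] r_pos[of "- (d / 2)"] \<open>d > 0\<close> by simp
  ultimately have "\<exists>t. - (2 / d) \<le> t \<and> t \<le> 2 / d \<and> q t = 0"
    using \<open>d > 0\<close> \<open>continuous_on UNIV q\<close>
    by (intro IVT2') (auto intro: continuous_on_subset)
  then show ?thesis
    unfolding q_def by blast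
qed

lemma odd_dimension_real_eigenvector:
  fixes c :: "real ^ 'n::finite ^ 'n"
  assumes "odd CARD('n)"
  shows "\<exists>l v. v \<noteq> 0 \<and> c *v v = l *\<^sub>R v"
proof -
  obtain l where "det (c - l *\<^sub>R mat 1) = 0"
    using odd_dimension_det_sub_scalar_eq_0[OF assms] by blast
  then obtain v where "v \<noteq> 0" "(c - l *\<^sub>R mat 1) *v v = 0"
    using invertible_det_nz invertible_left_inverse matrix_left_invertible_ker by metis
  then have "c *v v = l *\<^sub>R v"
    by (simp add: matrix_vector_mult_diff_rdistrib scaleR_matrix_vector_assoc[symmetric])
  then show ?thesis
    using \<open>v \<noteq> 0\<close> by blast
qed

text \<open>Schur's lemma for a matrix that has a real eigenvector: its eigenspace is \<open>G\<close>-invariant.\<close>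

lemma scalar_if_commutes_with_irreducible:
  fixes c :: "real ^ 'n::finite ^ 'n"
  assumes irr: "irreducible_module G" and comm: "\<And>y. y \<in> G \<Longrightarrow> c ** y = y ** c"
    and "v \<noteq> 0" "c *v v = l *\<^sub>R v"
  shows "c = l *\<^sub>R mat 1"
proof -
  define W where "W = {w. c *v w = l *\<^sub>R w}"
  have "subspace W"
    unfolding subspace_def W_def
    by (simp add: matrix_vector_right_distrib matrix_scaleR_vector_ac
        scaleR_matrix_vector_assoc[symmetric] scaleR_right_distrib)
  moreover have "y *v w \<in> W" if "y \<in> G" "w \<in> W" for y w
  proof -
    have "c *v (y *v w) = y *v (c *v w)"
      by (simp add: matrix_vector_mul_assoc comm \<open>y \<in> G\<close>)
    then show ?thesis
      using \<open>w \<in> W\<close> by (simp add: W_def matrix_scaleR_vector_ac scaleR_matrix_vector_assoc[symmetric])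
  qed
  ultimately have "W = {0} \<or> W = UNIV"
    using irr unfolding irreducible_module_def by blast
  moreover have "v \<in> W"
    using assms(4) by (simp add: W_def)
  ultimately have "W = UNIV"
    using \<open>v \<noteq> 0\<close> by blast
  then show ?thesis
    unfolding matrix_eq W_def by (auto simp: scaleR_matrix_vector_assoc[symmetric])
qed

lemma involution_has_fixed_vector:
  fixes m :: "real ^ 'n::finite ^ 'n"
  assumes "m ** m = mat 1" "m \<noteq> - mat 1"
  shows "\<exists>v. v \<noteq> 0 \<and> m *v v = v"
proof -
  have "\<exists>u. m *v u + u \<noteq> 0"
  proof (rule ccontr)
    assume "\<nexists>u. m *v u + u \<noteq> 0"
    then have "m *v u = - mat 1 *v u" for u
      by (metis add_eq_0_iff2 add.commute matrix_vector_mul_lid matrix_vector_mult_lneg)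
    then show False
      using assms(2) matrix_eq by blast
  qed
  then obtain u where u: "m *v u + u \<noteq> 0"
    by blast
  have "m *v (m *v u + u) = m *v u + u"
    using assms(1) by (simp add: matrix_vector_right_distrib matrix_vector_mul_assoc add.commute)
  then show ?thesis
    using u by blast
qed

theorem corollary4:
  fixes G :: "(real ^ 'n::finite ^ 'n) set" and n :: "real ^ 'n ^ 'n"
  assumes "odd CARD('n)"
    and "finite_GL_subgroup G"
    and "irreducible_module G"
    and "\<exists>g\<in>G. g \<noteq> mat 1"
    and "- mat 1 \<notin> G"
    and "in_normaliser n G"
    and "\<exists>k>0. matpow n k = mat 1"
    and "\<exists>g\<in>G. has_order_two_on (ad g \<circ> ad n) G"
  shows "\<exists>h\<in>G. \<exists>v. v \<noteq> 0 \<and> (h ** n) *v v = v"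
proof -
  obtain g where "g \<in> G" and order_two: "has_order_two_on (ad g \<circ> ad n) G"
    using assms(8) by blast
  define m where "m = g ** n"
  have "invertible g" "invertible n"
    using assms(2,6) \<open>g \<in> G\<close> unfolding finite_GL_subgroup_def in_normaliser_def by auto
  then have "invertible m" and "ad g \<circ> ad n = ad m"
    by (auto simp: m_def invertible_mult ad_ad)
  with order_two have ad_m: "has_order_two_on (ad m) G"
    by simp
  obtain l v where "v \<noteq> 0" "(m ** m) *v v = l *\<^sub>R v"
    using odd_dimension_real_eigenvector[OF assms(1)] by blast
  then have square: "m ** m = l *\<^sub>R mat 1"
    using scalar_if_commutes_with_irreducible[OF assms(3)]
      square_commutes_if_has_order_two_on[OF \<open>invertible m\<close> ad_m] by blast
  have "\<bar>det g\<bar> = 1" "\<bar>det n\<bar> = 1"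
    using finite_GL_subgroup_finite_order[OF assms(2) \<open>g \<in> G\<close>] assms(7)
    by (auto intro: abs_det_eq_1_if_matpow_eq_1)
  then have "\<bar>det m\<bar> = 1"
    by (simp add: m_def det_mul abs_mult)
  then have "det (m ** m) = 1"
    by (metis abs_mult_self_eq det_mul mult_1_left)
  then have "l = 1"
    using square scalar_matrix_eq_id_if_det_eq_1[OF assms(1)] by metis
  with square have "m ** m = mat 1"
    by simp
  moreover have "m \<noteq> - mat 1"
    using ad_m ad_neg_one unfolding has_order_two_on_def by auto
  ultimately obtain v where "v \<noteq> 0" "m *v v = v"
    using involution_has_fixed_vector by blast
  then show ?thesis
    using \<open>g \<in> G\<close> m_def by blast
qed

end
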